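(* For every permutation $w$, $c_w(\beta)=c_{w^{-1}}(\beta)$.
   Context: For $w\in S_n$, $\mathfrak{G}^{(\beta)}_w$ is the $\beta$-Grothendieck polynomial: $\mathfrak{G}^{(\beta)}_{w_0}=x_1^{n-1}\cdots x_{n-1}$ for $w_0=n\cdots21$, and $\mathfrak{G}^{(\beta)}_w=\partial_i((1+\beta x_{i+1})\mathfrak{G}^{(\beta)}_{ws_i})$ when $w(i)<w(i+1)$, with $\partial_if=(f-s_if)/(x_i-x_{i+1})$. $\Upsilon_w(\beta)=\mathfrak{G}^{(\beta)}_w(1,\dots,1)$, $\Upsilon_\emptyset=1$. $c_w(\beta)=\sum_{\emptyset\le v\le w}(-1)^{|w|-|v|}\Upsilon_{\mathrm{perm}(v)}(\beta)$, the sum over all subwords $v$ of $w$ (one per subset of positions), where $\mathrm{perm}(v)$ is the permutation order-isomorphic to $v$ and $|v|$ is the length. *)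

theory Defs
  imports Complex_Main "HOL-Library.Poly_Mapping"
begin

type_synonym mpoly = "(nat \<Rightarrow>\<^sub>0 nat) \<Rightarrow>\<^sub>0 real"

definition Xv :: "nat \<Rightarrow> mpoly" where
  "Xv i = Poly_Mapping.single (Poly_Mapping.single i 1) 1"

definition swp :: "nat \<Rightarrow> nat \<Rightarrow> nat" where
  "swp i k = (if k = i then Suc i else if k = Suc i then i else k)"

definition sact :: "nat \<Rightarrow> mpoly \<Rightarrow> mpoly" where
  "sact i f = Poly_Mapping.map_key (\<lambda>e. Poly_Mapping.map_key (swp i) e) f"

definition ddiff :: "nat \<Rightarrow> mpoly \<Rightarrow> mpoly" where
  "ddiff i f = (THE g. (Xv i - Xv (Suc i)) * g = f - sact i f)"

definition piop :: "real \<Rightarrow> nat \<Rightarrow> mpoly \<Rightarrow> mpoly" where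
  "piop \<beta> i f = ddiff i ((1 + Poly_Mapping.single 0 \<beta> * Xv (Suc i)) * f)"

text \<open>Evaluation at x = (1,1,...,1): the sum of all coefficients.\<close>
definition eval_ones :: "mpoly \<Rightarrow> real" where
  "eval_ones f = (\<Sum>e\<in>Poly_Mapping.keys f. Poly_Mapping.lookup f e)"

text \<open>Permutations in one-line notation as lists w = [w(1),...,w(n)].
  Paper position i (1-based) is list index i-1.\<close>

definition has_ascent :: "nat list \<Rightarrow> bool" where
  "has_ascent w = (\<exists>i. Suc i < length w \<and> w ! i < w ! Suc i)"

definition first_ascent :: "nat list \<Rightarrow> nat" where
  "first_ascent w = (LEAST i. Suc i < length w \<and> w ! i < w ! Suc i)"

definition swap_pos :: "nat list \<Rightarrow> nat \<Rightarrow> nat list" where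
  "swap_pos w i = w[i := w ! Suc i, Suc i := w ! i]"

definition groth_top :: "nat \<Rightarrow> mpoly" where
  "groth_top n = (\<Prod>i\<in>{1..<n}. Xv i ^ (n - i))"

text \<open>Recursion G_w = pi_i G_(w s_i) for an ascent i (we use the first one,
  well-definedness being a standard fact), with G_(w0) = x_1^(n-1)...x_(n-1).
  The fuel argument k only serves termination: each step strictly increases the
  number of inversions, so fuel length(w)^2 is never exhausted.\<close>
fun groth_aux :: "nat \<Rightarrow> real \<Rightarrow> nat list \<Rightarrow> mpoly" where
  "groth_aux 0 \<beta> w = groth_top (length w)"
| "groth_aux (Suc k) \<beta> w =
     (if has_ascent w
      then piop \<beta> (Suc (first_ascent w)) (groth_aux k \<beta> (swap_pos w (first_ascent w)))
      else groth_top (length w))"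

definition groth :: "real \<Rightarrow> nat list \<Rightarrow> mpoly" where
  "groth \<beta> w = groth_aux (length w * length w) \<beta> w"

definition Upsilon :: "real \<Rightarrow> nat list \<Rightarrow> real" where
  "Upsilon \<beta> w = (if w = [] then 1 else eval_ones (groth \<beta> w))"

definition std :: "nat list \<Rightarrow> nat list" where
  "std v = map (\<lambda>x. card {y \<in> set v. y \<le> x}) v"

definition cw :: "real \<Rightarrow> nat list \<Rightarrow> real" where
  "cw \<beta> w = (\<Sum>S\<in>Pow {..<length w}.
      (-1) ^ (length w - card S) * Upsilon \<beta> (std (nths w S)))"

definition is_perm :: "nat list \<Rightarrow> bool" where
  "is_perm w = (distinct w \<and> set w = {1..length w})"

definition perm_inv :: "nat list \<Rightarrow> nat list" where
  "perm_inv w = map (\<lambda>k. Suc (LEAST j. j < length w \<and> w ! j = k)) [1..<Suc (length w)]"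

end

theory Submission
  imports Defs
begin

text \<open>By the Fomin--Kirillov formula, the beta-Grothendieck polynomial of w is the coefficient
  of w in a staircase product of factors h_j(x) = 1 + x u_j, where the u_j satisfy the braid
  relations and u_j^2 = beta u_j. We verify this formula directly: the coefficient functional
  satisfies the defining recursion, because the Yang--Baxter relations make the divided
  difference operators swap adjacent rows of the staircase, and it has the right value at the
  longest word. At x = (1, ..., 1) every factor is h_j(1). Inversion of permutations exchanges
  the coefficient of w^-1 in a product with the coefficient of w in the reversed product, and
  the reversed staircase word equals the original one up to commutations of distant letters,
  since both have the same (palindromic) restriction to every pair of letters {c, c+1}. Hence
  Upsilon_(w^-1) = Upsilon_w. Finally, exchanging positions and values matches the subwords
  of w^-1 with those of w, inverting the patterns, which turns c_(w^-1) into c_w.\<close>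

section \<open>Adjacent transpositions of words\<close>

lemma swp_swp [simp]: "swp i (swp i k) = k"
  by (simp add: swp_def)

lemma inj_swp: "inj (swp i)"
  by (metis injI swp_swp)

lemma swp_less: "Suc i < n \<Longrightarrow> k < n \<Longrightarrow> swp i k < n"
  by (auto simp: swp_def)

lemma length_swap_pos [simp]: "length (swap_pos w i) = length w"
  by (simp add: swap_pos_def)

lemma nth_swap_pos:
  "Suc i < length w \<Longrightarrow> k < length w \<Longrightarrow> swap_pos w i ! k = w ! swp i k"
  by (auto simp: swap_pos_def swp_def nth_list_update)

lemma swap_pos_swap_pos [simp]: "Suc i < length w \<Longrightarrow> swap_pos (swap_pos w i) i = w"
  by (rule nth_equalityI) (auto simp: nth_swap_pos swp_less)

lemma distinct_swap_pos [simp]: "Suc i < length w \<Longrightarrow> distinct (swap_pos w i) = distinct w"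
  unfolding swap_pos_def by (rule distinct_swap) auto

lemma set_swap_pos [simp]: "Suc i < length w \<Longrightarrow> set (swap_pos w i) = set w"
  unfolding swap_pos_def by (rule set_swap) auto

definition far :: "nat \<Rightarrow> nat \<Rightarrow> bool" where
  "far j k \<longleftrightarrow> Suc j < k \<or> Suc k < j"

lemma swap_pos_commute: "far j k \<Longrightarrow> swap_pos (swap_pos w j) k = swap_pos (swap_pos w k) j"
  by (cases "Suc j < length w"; cases "Suc k < length w")
     (auto simp: far_def swap_pos_def nth_list_update list_update_swap)

lemma swap_pos_braid: "Suc (Suc j) < length w \<Longrightarrow>
  swap_pos (swap_pos (swap_pos w j) (Suc j)) j = swap_pos (swap_pos (swap_pos w (Suc j)) j) (Suc j)"
  by (rule nth_equalityI) (auto simp: nth_swap_pos swp_def)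

definition descent :: "nat list \<Rightarrow> nat \<Rightarrow> bool" where
  "descent w j \<longleftrightarrow> Suc j < length w \<and> w ! Suc j < w ! j"

lemma descent_swap_pos_far: "far j k \<Longrightarrow> Suc j < length w \<Longrightarrow> descent (swap_pos w j) k = descent w k"
  by (auto simp: descent_def nth_swap_pos swp_def far_def)

section \<open>A Hecke algebra acting on functions of words\<close>

text \<open>A function M on words stands for a linear functional on the free module spanned by
  words, and hecke_u b j is dual to right multiplication by a generator u_j of the algebra
  with u_j^2 = b u_j and the braid relations; hecke_h b j z corresponds to 1 + z u_j.\<close>

definition hecke_u :: "'a::comm_ring_1 \<Rightarrow> nat \<Rightarrow> (nat list \<Rightarrow> 'a) \<Rightarrow> nat list \<Rightarrow> 'a" where
  "hecke_u b j M w = (if distinct w \<and> descent w j then M (swap_pos w j) + b * M w else 0)"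

lemma hecke_u_add: "hecke_u b j (\<lambda>v. f v + g v) w = hecke_u b j f w + hecke_u b j g w"
  by (simp add: hecke_u_def algebra_simps)

lemma hecke_u_diff: "hecke_u b j (\<lambda>v. f v - g v) w = hecke_u b j f w - hecke_u b j g w"
  by (simp add: hecke_u_def algebra_simps)

lemma hecke_u_scale: "hecke_u b j (\<lambda>v. c * f v) w = c * hecke_u b j f w"
  by (simp add: hecke_u_def algebra_simps)

lemmas hecke_u_linear = hecke_u_add hecke_u_diff hecke_u_scale

lemma hecke_u_idem: "hecke_u b j (hecke_u b j M) w = b * hecke_u b j M w"
  by (auto simp: hecke_u_def descent_def nth_swap_pos swp_def algebra_simps)

lemma hecke_u_commute: "far j k \<Longrightarrow> hecke_u b j (hecke_u b k M) w = hecke_u b k (hecke_u b j M) w"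
  by (cases "Suc j < length w"; cases "Suc k < length w")
     (auto simp: hecke_u_def descent_swap_pos_far swap_pos_commute far_def algebra_simps, auto simp: descent_def)

lemma hecke_u_braid:
  "hecke_u b (Suc j) (hecke_u b j (hecke_u b (Suc j) M)) w = hecke_u b j (hecke_u b (Suc j) (hecke_u b j M)) w"
proof (cases "Suc (Suc j) < length w \<and> distinct w")
  case True
  then show ?thesis
    using nth_eq_iff_index_eq[of w j "Suc j"] nth_eq_iff_index_eq[of w j "Suc (Suc j)"]
      nth_eq_iff_index_eq[of w "Suc j" "Suc (Suc j)"]
    by (cases "w ! j < w ! Suc j"; cases "w ! j < w ! Suc (Suc j)"; cases "w ! Suc j < w ! Suc (Suc j)")
       (simp_all add: hecke_u_def descent_def nth_swap_pos swp_def swap_pos_braid algebra_simps)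
next
  case False
  then show ?thesis by (auto simp: hecke_u_def descent_def)
qed

definition hecke_h :: "'a::comm_ring_1 \<Rightarrow> nat \<Rightarrow> 'a \<Rightarrow> (nat list \<Rightarrow> 'a) \<Rightarrow> nat list \<Rightarrow> 'a" where
  "hecke_h b j z M = (\<lambda>w. M w + z * hecke_u b j M w)"

definition hecke_k :: "'a::comm_ring_1 \<Rightarrow> nat \<Rightarrow> 'a \<Rightarrow> 'a \<Rightarrow> (nat list \<Rightarrow> 'a) \<Rightarrow> nat list \<Rightarrow> 'a" where
  "hecke_k b j x y M = (\<lambda>w. (1 + b * x) * M w - (x - y) * hecke_u b j M w)"

lemma hecke_h_scale: "hecke_h b j z (\<lambda>w. c * M w) = (\<lambda>w. c * hecke_h b j z M w)"
  by (simp add: hecke_h_def hecke_u_scale algebra_simps)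

lemma hecke_h_commute: "far j k \<Longrightarrow> hecke_h b j z (hecke_h b k y M) = hecke_h b k y (hecke_h b j z M)"
  by (rule ext) (simp add: hecke_h_def hecke_u_linear hecke_u_commute[of j k] algebra_simps)

lemma hecke_k_h_commute: "far j k \<Longrightarrow> hecke_k b j x y (hecke_h b k z M) = hecke_h b k z (hecke_k b j x y M)"
  by (rule ext) (simp add: hecke_h_def hecke_k_def hecke_u_linear hecke_u_commute[of j k] algebra_simps)

lemma hecke_k_h: "hecke_k b j x y (hecke_h b j x M) = (\<lambda>w. (1 + b * x) * hecke_h b j y M w)"
  by (simp add: hecke_k_def hecke_h_def hecke_u_linear hecke_u_idem algebra_simps)

lemma hecke_k_h_h:
  "hecke_k b j x y (hecke_h b (Suc j) y (hecke_h b j x M)) = hecke_h b (Suc j) x (hecke_h b j y (hecke_k b (Suc j) x y M))"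
  by (rule ext) (simp add: hecke_k_def hecke_h_def hecke_u_linear hecke_u_idem hecke_u_braid algebra_simps)

section \<open>The Fomin--Kirillov staircase product\<close>

definition hecke_prod :: "'a::comm_ring_1 \<Rightarrow> (nat \<times> 'a) list \<Rightarrow> (nat list \<Rightarrow> 'a) \<Rightarrow> nat list \<Rightarrow> 'a" where
  "hecke_prod b ws M = foldl (\<lambda>N (j, z). hecke_h b j z N) M ws"

lemma hecke_prod_Nil [simp]: "hecke_prod b [] M = M"
  by (simp add: hecke_prod_def)

lemma hecke_prod_Cons [simp]: "hecke_prod b ((j, z) # ws) M = hecke_prod b ws (hecke_h b j z M)"
  by (simp add: hecke_prod_def)

lemma hecke_prod_append: "hecke_prod b (xs @ ys) M = hecke_prod b ys (hecke_prod b xs M)"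
  by (simp add: hecke_prod_def)

lemma hecke_prod_snoc: "hecke_prod b (xs @ [(j, z)]) M = hecke_h b j z (hecke_prod b xs M)"
  by (simp add: hecke_prod_def)

lemma hecke_prod_scale: "hecke_prod b ws (\<lambda>w. c * M w) = (\<lambda>w. c * hecke_prod b ws M w)"
  by (induction ws arbitrary: M) (auto simp: hecke_h_scale)

lemma hecke_h_prod_commute:
  "\<forall>(k, y) \<in> set ws. far j k \<Longrightarrow> hecke_h b j z (hecke_prod b ws M) = hecke_prod b ws (hecke_h b j z M)"
  by (induction ws arbitrary: M) (auto simp: hecke_h_commute)

lemma hecke_k_prod_commute:
  "\<forall>(k, y) \<in> set ws. far j k \<Longrightarrow> hecke_k b j x y (hecke_prod b ws M) = hecke_prod b ws (hecke_k b j x y M)"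
  by (induction ws arbitrary: M) (auto simp: hecke_k_h_commute)

lemma hecke_prod_hom:
  assumes "\<And>a c. \<phi> (a + c) = \<phi> a + \<phi> c" "\<And>a c. \<phi> (a * c) = \<phi> a * \<phi> c" "\<phi> 0 = 0"
  shows "\<phi> (hecke_prod b ws M w) = hecke_prod (\<phi> b) (map (\<lambda>(j, z). (j, \<phi> z)) ws) (\<lambda>v. \<phi> (M v)) w"
proof (induction ws arbitrary: M)
  case (Cons jz ws)
  obtain j z where "jz = (j, z)" by fastforce
  moreover have "(\<lambda>v. \<phi> (hecke_h b j z M v)) = hecke_h (\<phi> b) j (\<phi> z) (\<lambda>v. \<phi> (M v))"
    by (simp add: fun_eq_iff hecke_h_def hecke_u_def assms)
  ultimately show ?case using Cons[of "hecke_h b j z M"] by simp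
qed simp

definition hchain :: "'a \<Rightarrow> nat \<Rightarrow> nat \<Rightarrow> (nat \<times> 'a) list" where
  "hchain z lo hi = map (\<lambda>j. (j, z)) (rev [lo..<hi])"

lemma hchain_empty [simp]: "hi \<le> lo \<Longrightarrow> hchain z lo hi = []"
  by (simp add: hchain_def)

lemma hchain_split: "lo < hi \<Longrightarrow> hchain z lo hi = hchain z (Suc lo) hi @ [(lo, z)]"
  by (simp add: hchain_def upt_rec)

lemma set_hchain: "set (hchain z lo hi) = (\<lambda>j. (j, z)) ` {lo..<hi}"
  by (auto simp: hchain_def)

text \<open>The Yang--Baxter relations let hecke_k travel through two adjacent rows of the
  staircase, exchanging their variables.\<close>

lemma hecke_k_hchains:
  "hecke_k b p x y (hecke_prod b (hchain y (Suc p) (Suc p + m)) (hecke_prod b (hchain x p (Suc p + m)) M))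
   = (\<lambda>w. (1 + b * x) * hecke_prod b (hchain x (Suc p) (Suc p + m)) (hecke_prod b (hchain y p (Suc p + m)) M) w)"
proof (induction m arbitrary: p M)
  case 0
  show ?case by (simp add: hchain_split hecke_prod_snoc hecke_k_h)
next
  case (Suc m)
  define hi where "hi = Suc (Suc p) + m"
  let ?Y = "hchain y (Suc (Suc p)) hi" and ?X = "hchain x (Suc (Suc p)) hi"
  have far_tail: "\<forall>(k, z) \<in> set (hchain u (Suc (Suc p)) hi). far p k" for u :: 'a
    by (auto simp: set_hchain far_def)
  have chain1: "hchain u (Suc p) hi = hchain u (Suc (Suc p)) hi @ [(Suc p, u)]" for u :: 'a
    using hchain_split[of "Suc p" hi u] by (simp add: hi_def)
  have chain0: "hchain u p hi = hchain u (Suc p) hi @ [(p, u)]" for u :: 'a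
    using hchain_split[of p hi u] by (simp add: hi_def)
  have IH: "hecke_k b (Suc p) x y (hecke_prod b ?Y (hecke_prod b (hchain x (Suc p) hi) N))
     = (\<lambda>w. (1 + b * x) * hecke_prod b ?X (hecke_prod b (hchain y (Suc p) hi) N) w)" for N
    using Suc.IH[of "Suc p" N] by (simp add: hi_def)
  have "hecke_k b p x y (hecke_prod b (hchain y (Suc p) hi) (hecke_prod b (hchain x p hi) M))
      = hecke_k b p x y (hecke_h b (Suc p) y (hecke_h b p x
          (hecke_prod b ?Y (hecke_prod b (hchain x (Suc p) hi) M))))"
    by (simp add: chain0 chain1 hecke_prod_append hecke_prod_snoc hecke_h_prod_commute[OF far_tail])
  also have "\<dots> = hecke_h b (Suc p) x (hecke_h b p y
          (hecke_k b (Suc p) x y (hecke_prod b ?Y (hecke_prod b (hchain x (Suc p) hi) M))))"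
    by (rule hecke_k_h_h)
  also have "\<dots> = (\<lambda>w. (1 + b * x) * hecke_h b (Suc p) x (hecke_h b p y
          (hecke_prod b ?X (hecke_prod b (hchain y (Suc p) hi) M))) w)"
    by (simp add: IH hecke_h_scale)
  also have "\<dots> = (\<lambda>w. (1 + b * x) * hecke_prod b (hchain x (Suc p) hi) (hecke_prod b (hchain y p hi) M) w)"
    by (simp add: chain0 chain1 hecke_prod_append hecke_prod_snoc hecke_h_prod_commute[OF far_tail])
  finally show ?case by (simp add: hi_def)
qed

text \<open>fomin_kirillov b n zs w is the coefficient of w in the staircase product whose row q
  consists of the factors h_j(zs q), j = n - 2, ..., q. With zs q = x_(q+1) this is the
  Fomin--Kirillov formula for the beta-Grothendieck polynomials.\<close>

definition staircase :: "nat \<Rightarrow> (nat \<Rightarrow> 'a) \<Rightarrow> nat list \<Rightarrow> (nat \<times> 'a) list" where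
  "staircase n zs qs = concat (map (\<lambda>q. hchain (zs q) q (n - 1)) qs)"

definition delta_id :: "nat \<Rightarrow> nat list \<Rightarrow> 'a::comm_ring_1" where
  "delta_id n w = (if w = [1..<Suc n] then 1 else 0)"

definition fomin_kirillov :: "'a::comm_ring_1 \<Rightarrow> nat \<Rightarrow> (nat \<Rightarrow> 'a) \<Rightarrow> nat list \<Rightarrow> 'a" where
  "fomin_kirillov b n zs = hecke_prod b (staircase n zs [0..<n]) (delta_id n)"

lemma staircase_append: "staircase n zs (xs @ ys) = staircase n zs xs @ staircase n zs ys"
  by (simp add: staircase_def)

lemma staircase_Cons: "staircase n zs (q # qs) = hchain (zs q) q (n - 1) @ staircase n zs qs"
  by (simp add: staircase_def)

lemma staircase_cong: "(\<And>q. q \<in> set qs \<Longrightarrow> zs q = zs' q) \<Longrightarrow> staircase n zs qs = staircase n zs' qs"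
  by (induction qs) (auto simp: staircase_def)

lemma map_staircase: "map (\<lambda>(j, z). (j, \<phi> z)) (staircase n zs qs) = staircase n (\<phi> \<circ> zs) qs"
  by (induction qs) (auto simp: staircase_def hchain_def)

lemma upt_split_pair: "Suc (Suc p) \<le> n \<Longrightarrow> [0..<n] = [0..<p] @ p # Suc p # [Suc (Suc p)..<n]"
proof -
  assume n: "Suc (Suc p) \<le> n"
  have "[0..<n] = [0..<p] @ [p..<n]"
    using upt_add_eq_append[of 0 p "n - p"] n by simp
  also have "[p..<n] = p # Suc p # [Suc (Suc p)..<n]"
    using n by (simp add: upt_rec)
  finally show ?thesis .
qed

lemma hecke_k_fomin_kirillov:
  assumes "Suc (Suc p) \<le> n"
  shows "hecke_k b p (zs p) (zs (Suc p)) (fomin_kirillov b n zs)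
       = (\<lambda>w. (1 + b * zs p) * fomin_kirillov b n (zs \<circ> swp p) w)"
proof -
  define m where "m = n - 2 - p"
  have n1: "n - Suc 0 = Suc (p + m)" using assms by (simp add: m_def)
  let ?T = "staircase n zs [Suc (Suc p)..<n]" and ?H = "hecke_prod b (staircase n zs [0..<p]) (delta_id n)"
  have far_T: "\<forall>(k, y) \<in> set ?T. far p k"
    by (auto simp: staircase_def set_hchain far_def)
  have same_T: "staircase n (zs \<circ> swp p) [Suc (Suc p)..<n] = ?T"
    and same_H: "staircase n (zs \<circ> swp p) [0..<p] = staircase n zs [0..<p]"
    by (auto intro!: staircase_cong simp: swp_def)
  have "fomin_kirillov b n zs = hecke_prod b ?T
      (hecke_prod b (hchain (zs (Suc p)) (Suc p) (Suc p + m)) (hecke_prod b (hchain (zs p) p (Suc p + m)) ?H))"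
    unfolding fomin_kirillov_def upt_split_pair[OF assms]
    by (simp add: staircase_append staircase_Cons hecke_prod_append n1)
  moreover have "fomin_kirillov b n (zs \<circ> swp p) = hecke_prod b ?T
      (hecke_prod b (hchain (zs p) (Suc p) (Suc p + m)) (hecke_prod b (hchain (zs (Suc p)) p (Suc p + m)) ?H))"
    unfolding fomin_kirillov_def upt_split_pair[OF assms]
    by (simp add: staircase_append staircase_Cons hecke_prod_append n1 same_T same_H swp_def)
  ultimately show ?thesis
    using hecke_k_hchains[of b p "zs p" "zs (Suc p)" m]
    by (simp add: hecke_k_prod_commute[OF far_T] hecke_prod_scale)
qed

lemma fomin_kirillov_hom:
  assumes "\<And>a c. \<phi> (a + c) = \<phi> a + \<phi> c" "\<And>a c. \<phi> (a * c) = \<phi> a * \<phi> c" "\<phi> 0 = 0" "\<phi> 1 = 1"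
  shows "\<phi> (fomin_kirillov b n zs w) = fomin_kirillov (\<phi> b) n (\<phi> \<circ> zs) w"
proof -
  have "(\<lambda>v. \<phi> (delta_id n v)) = delta_id n"
    by (simp add: fun_eq_iff delta_id_def assms)
  then show ?thesis
    by (simp add: fomin_kirillov_def hecke_prod_hom[OF assms(1-3)] map_staircase)
qed

section \<open>The symmetric group action on polynomials and evaluation at ones\<close>

definition swap_exp :: "nat \<Rightarrow> (nat \<Rightarrow>\<^sub>0 nat) \<Rightarrow> (nat \<Rightarrow>\<^sub>0 nat)" where
  "swap_exp i e = Poly_Mapping.map_key (swp i) e"

lemma lookup_swap_exp: "Poly_Mapping.lookup (swap_exp i e) k = Poly_Mapping.lookup e (swp i k)"
  by (simp add: swap_exp_def map_key.rep_eq[OF inj_swp])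

lemma swap_exp_swap_exp [simp]: "swap_exp i (swap_exp i e) = e"
  by (rule poly_mapping_eqI) (simp add: lookup_swap_exp)

lemma bij_swap_exp: "bij (swap_exp i)"
  by (metis bij_betw_def injI surj_def swap_exp_swap_exp)

lemma swap_exp_zero [simp]: "swap_exp i 0 = 0"
  by (rule poly_mapping_eqI) (simp add: lookup_swap_exp)

lemma swap_exp_add: "swap_exp i (a + c) = swap_exp i a + swap_exp i c"
  by (rule poly_mapping_eqI) (simp add: lookup_swap_exp lookup_add)

lemma swap_exp_single: "swap_exp i (Poly_Mapping.single k v) = Poly_Mapping.single (swp i k) v"
  by (rule poly_mapping_eqI) (simp add: lookup_swap_exp lookup_single when_def, metis swp_swp)

lemma lookup_sact: "Poly_Mapping.lookup (sact i f) e = Poly_Mapping.lookup f (swap_exp i e)"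
proof -
  have "sact i f = Poly_Mapping.map_key (swap_exp i) f"
    by (simp add: sact_def swap_exp_def[abs_def])
  then show ?thesis
    by (simp add: map_key.rep_eq[OF bij_is_inj[OF bij_swap_exp]])
qed

lemma sact_add: "sact i (f + g) = sact i f + sact i g"
  by (rule poly_mapping_eqI) (simp add: lookup_sact lookup_add)

lemma sact_zero: "sact i 0 = 0"
  by (rule poly_mapping_eqI) (simp add: lookup_sact)

lemma sact_single: "sact i (Poly_Mapping.single e c) = Poly_Mapping.single (swap_exp i e) c"
  by (rule poly_mapping_eqI) (auto simp: lookup_sact lookup_single when_def)

lemma sact_const: "sact i (Poly_Mapping.single 0 c) = Poly_Mapping.single 0 c"
  by (simp add: sact_single)

lemma sact_one: "sact i 1 = 1"
  by (metis sact_const single_one)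

lemma sact_Xv: "sact i (Xv k) = Xv (swp i k)"
  by (simp add: Xv_def sact_single swap_exp_single)

lemma sact_mult: "sact i (f * g) = sact i f * sact i g"
proof (rule poly_mapping_eqI)
  fix k
  let ?s = "swap_exp i" and ?f = "Poly_Mapping.lookup f" and ?g = "Poly_Mapping.lookup g"
  have shift: "(k = l + q) = (?s k = ?s l + ?s q)" for l q
    by (metis swap_exp_add swap_exp_swap_exp)
  have "Poly_Mapping.lookup (sact i f * sact i g) k = Sum_any (\<lambda>l. ?f (?s l) * Sum_any (\<lambda>q. ?g (?s q) when k = l + q))"
    by (simp add: lookup_mult lookup_sact)
  also have "\<dots> = Sum_any (\<lambda>l. ?f (?s l) * Sum_any (\<lambda>q. ?g q when ?s k = ?s l + q))"
  proof -
    have "Sum_any (\<lambda>q. ?g (?s q) when k = l + q) = Sum_any (\<lambda>q. ?g q when ?s k = ?s l + q)" for l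
      by (rule Sum_any.reindex_cong[OF bij_swap_exp[of i]]) (auto simp: fun_eq_iff shift)
    then show ?thesis by simp
  qed
  also have "\<dots> = Sum_any (\<lambda>l. ?f l * Sum_any (\<lambda>q. ?g q when ?s k = l + q))"
    by (rule Sum_any.reindex_cong[OF bij_swap_exp[of i]]) (auto simp: fun_eq_iff)
  also have "\<dots> = Poly_Mapping.lookup (sact i (f * g)) k"
    by (simp add: lookup_mult lookup_sact)
  finally show "Poly_Mapping.lookup (sact i (f * g)) k = Poly_Mapping.lookup (sact i f * sact i g) k" ..
qed

lemma eval_ones_conv_Sum_any: "eval_ones f = Sum_any (Poly_Mapping.lookup f)"
  unfolding eval_ones_def by (rule Sum_any.expand_superset[symmetric]) (auto simp: in_keys_iff)

lemma eval_ones_add: "eval_ones (f + g) = eval_ones f + eval_ones g"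
  unfolding eval_ones_conv_Sum_any lookup_add
  by (rule Sum_any.distrib) (auto simp flip: in_keys_iff)

lemma eval_ones_single: "eval_ones (Poly_Mapping.single e c) = c"
  by (simp add: eval_ones_conv_Sum_any lookup_single)

lemma eval_ones_zero: "eval_ones 0 = 0"
  by (simp add: eval_ones_def)

lemma eval_ones_one: "eval_ones 1 = 1"
  by (metis eval_ones_single single_one)

lemma eval_ones_Xv: "eval_ones (Xv k) = 1"
  by (simp add: Xv_def eval_ones_single)

lemma update_eq_add_single:
  "k \<notin> Poly_Mapping.keys f \<Longrightarrow> Poly_Mapping.update k v f = f + Poly_Mapping.single k v"
  by (rule poly_mapping_eqI) (auto simp: lookup_update lookup_add lookup_single when_def in_keys_iff)

lemma eval_ones_single_mult: "eval_ones (Poly_Mapping.single e c * g) = c * eval_ones g"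
  by (induction g rule: update_induct)
     (simp_all add: eval_ones_zero update_eq_add_single distrib_left eval_ones_add mult_single eval_ones_single)

lemma eval_ones_mult: "eval_ones (f * g) = eval_ones f * eval_ones g"
  by (induction f rule: update_induct)
     (simp_all add: eval_ones_zero update_eq_add_single distrib_right eval_ones_add eval_ones_single_mult eval_ones_single)

lemma ddiff_eqI:
  assumes "(Xv i - Xv (Suc i)) * g = f - sact i f"
  shows "ddiff i f = g"
  unfolding ddiff_def
proof (rule the_equality)
  have "Xv i \<noteq> Xv (Suc i)"
    unfolding Xv_def by (metis lookup_single_eq lookup_single_not_eq n_not_Suc_n one_neq_zero)
  then show "h = g" if "(Xv i - Xv (Suc i)) * h = f - sact i f" for h
    using that assms mult_left_cancel[of "Xv i - Xv (Suc i)" h g] by simp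
qed (rule assms)

section \<open>Grothendieck polynomials as staircase coefficients\<close>

definition fk_groth :: "real \<Rightarrow> nat \<Rightarrow> nat list \<Rightarrow> mpoly" where
  "fk_groth \<beta> n = fomin_kirillov (Poly_Mapping.single 0 \<beta>) n (\<lambda>q. Xv (Suc q))"

lemma sact_fk_groth:
  "sact (Suc p) (fk_groth \<beta> n w) = fomin_kirillov (Poly_Mapping.single 0 \<beta>) n ((\<lambda>q. Xv (Suc q)) \<circ> swp p) w"
proof -
  have "sact (Suc p) (fk_groth \<beta> n w)
      = fomin_kirillov (sact (Suc p) (Poly_Mapping.single 0 \<beta>)) n (sact (Suc p) \<circ> (\<lambda>q. Xv (Suc q))) w"
    unfolding fk_groth_def by (rule fomin_kirillov_hom) (simp_all add: sact_add sact_mult sact_zero sact_one)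
  also have "sact (Suc p) \<circ> (\<lambda>q. Xv (Suc q)) = (\<lambda>q. Xv (Suc q)) \<circ> swp p"
    by (auto simp: fun_eq_iff sact_Xv swp_def)
  finally show ?thesis by (simp add: sact_const comp_def)
qed

text \<open>Variables are numbered from 1 and list positions from 0: the divided difference in
  x_(p+1), x_(p+2) corresponds to the transposition of the positions p, p + 1.\<close>

lemma piop_fk_groth:
  assumes "Suc (Suc p) \<le> n" "distinct w" "descent w p"
  shows "piop \<beta> (Suc p) (fk_groth \<beta> n w) = fk_groth \<beta> n (swap_pos w p)"
  unfolding piop_def
proof (rule ddiff_eqI)
  let ?B = "Poly_Mapping.single 0 \<beta>" and ?x = "Xv (Suc p)" and ?y = "Xv (Suc (Suc p))"
  let ?F = "fk_groth \<beta> n" and ?F' = "fomin_kirillov ?B n ((\<lambda>q. Xv (Suc q)) \<circ> swp p)"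
  have "(1 + ?B * ?x) * ?F w - (?x - ?y) * (?F (swap_pos w p) + ?B * ?F w) = (1 + ?B * ?x) * ?F' w"
    using fun_cong[OF hecke_k_fomin_kirillov[OF assms(1), of ?B "\<lambda>q. Xv (Suc q)"], of w] assms(2,3)
    by (simp add: hecke_k_def hecke_u_def fk_groth_def)
  moreover have "sact (Suc p) ((1 + ?B * ?y) * ?F w) = (1 + ?B * ?x) * ?F' w"
    by (simp add: sact_mult sact_add sact_one sact_Xv sact_fk_groth sact_const swp_def)
  ultimately show "(?x - ?y) * ?F (swap_pos w p) = (1 + ?B * ?y) * ?F w - sact (Suc p) ((1 + ?B * ?y) * ?F w)"
    by (simp add: algebra_simps)
qed

definition inversions :: "nat list \<Rightarrow> (nat \<times> nat) set" where
  "inversions w = {(i, j). i < j \<and> j < length w \<and> w ! j < w ! i}"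

lemma inversions_subset: "inversions w \<subseteq> {..<length w} \<times> {..<length w}"
  by (auto simp: inversions_def)

lemma finite_inversions: "finite (inversions w)"
  using finite_subset[OF inversions_subset] by blast

lemma card_inversions_le: "card (inversions w) \<le> length w * length w"
  using card_mono[OF _ inversions_subset] by (simp add: card_cartesian_product)

lemma inversions_swap_pos:
  assumes "Suc p < length w" "w ! p < w ! Suc p"
  shows "inversions (swap_pos w p) = insert (p, Suc p) (map_prod (swp p) (swp p) ` inversions w)"
proof -
  have "(i, j) \<in> inversions (swap_pos w p) \<longleftrightarrow> (i, j) = (p, Suc p) \<or> (swp p i, swp p j) \<in> inversions w" for i j
    using assms by (auto simp: inversions_def nth_swap_pos swp_def)
  moreover have "(i, j) \<in> map_prod (swp p) (swp p) ` A \<longleftrightarrow> (swp p i, swp p j) \<in> A" for i j A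
    by (auto simp: image_iff intro!: bexI[where x = "(swp p i, swp p j)"])
  ultimately show ?thesis by auto
qed

lemma card_inversions_swap_pos:
  assumes "Suc p < length w" "w ! p < w ! Suc p"
  shows "card (inversions (swap_pos w p)) = Suc (card (inversions w))"
proof -
  have "inj (map_prod (swp p) (swp p))"
    using map_prod_inj_on[OF inj_swp inj_swp] by simp
  moreover have "(p, Suc p) \<notin> map_prod (swp p) (swp p) ` inversions w"
    using assms by (auto simp: inversions_def swp_def split: if_splits)
  ultimately show ?thesis
    by (simp add: inversions_swap_pos[OF assms] finite_inversions card_image inj_on_subset)
qed

text \<open>At the longest word only the term using every u_j contributes; this is tracked by
  recording the coefficients on words with at least as many inversions as the current one.\<close>

definition top_term :: "(nat list \<Rightarrow> 'a::zero) \<Rightarrow> nat list \<Rightarrow> 'a \<Rightarrow> bool" where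
  "top_term M L c \<longleftrightarrow> distinct L \<and>
     (\<forall>w. card (inversions L) \<le> card (inversions w) \<longrightarrow> M w = (if w = L then c else 0))"

lemma top_term_delta_id: "top_term (delta_id n) [1..<Suc n] 1"
  by (simp add: top_term_def delta_id_def)

lemma top_term_hecke_h:
  assumes top: "top_term M L c" and p: "Suc p < length L" "L ! p < L ! Suc p"
  shows "top_term (hecke_h b p z M) (swap_pos L p) (z * c)"
proof -
  let ?L' = "swap_pos L p"
  have card_L': "card (inversions ?L') = Suc (card (inversions L))"
    by (rule card_inversions_swap_pos[OF p])
  have L': "distinct ?L'" "descent ?L' p"
    using top p by (simp_all add: top_term_def descent_def nth_swap_pos swp_def)
  have M: "M w = (if w = L then c else 0)" if "card (inversions L) \<le> card (inversions w)" for w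
    using top that by (simp add: top_term_def)
  have "hecke_h b p z M w = (if w = ?L' then z * c else 0)"
    if w: "card (inversions ?L') \<le> card (inversions w)" for w
  proof -
    have "M w = 0" using M[of w] w card_L' by auto
    moreover have "hecke_u b p M w = (if w = ?L' then c else 0)"
    proof (cases "distinct w \<and> descent w p")
      case True
      then have "Suc p < length w" "swap_pos w p ! p < swap_pos w p ! Suc p"
        by (simp_all add: descent_def nth_swap_pos swp_def)
      then have "card (inversions w) = Suc (card (inversions (swap_pos w p)))"
        using card_inversions_swap_pos[of p "swap_pos w p"] by simp
      moreover have "swap_pos w p = L \<longleftrightarrow> w = ?L'"
        using \<open>Suc p < length w\<close> by (metis length_swap_pos swap_pos_swap_pos)
      ultimately show ?thesis
        using True w card_L' M[of "swap_pos w p"] \<open>M w = 0\<close> by (simp add: hecke_u_def)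
    next
      case False
      then show ?thesis using L' by (auto simp: hecke_u_def)
    qed
    ultimately show ?thesis by (simp add: hecke_h_def)
  qed
  then show ?thesis using L' by (simp add: top_term_def)
qed

text \<open>The word carried by that term after the rows 0, ..., q - 1 and the factors of row q
  at the positions n - 2, ..., t.\<close>

definition staircase_word :: "nat \<Rightarrow> nat \<Rightarrow> nat \<Rightarrow> nat list" where
  "staircase_word n q t = map (\<lambda>i. if i < q then n - i else if i < t then i - q + 1
     else if i = t then n - q else i - q) [0..<n]"

lemma length_staircase_word [simp]: "length (staircase_word n q t) = n"
  by (simp add: staircase_word_def)

lemma nth_staircase_word: "i < n \<Longrightarrow> staircase_word n q t ! i =
    (if i < q then n - i else if i < t then i - q + 1 else if i = t then n - q else i - q)"
  by (simp add: staircase_word_def)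

lemma top_term_hchain:
  assumes "top_term M (staircase_word n q (n - 1)) c" "q \<le> t" "t \<le> n - 1"
  shows "top_term (hecke_prod b (hchain z t (n - 1)) M) (staircase_word n q t) (z ^ (n - 1 - t) * c)"
  using assms(2,3)
proof (induction "n - 1 - t" arbitrary: t)
  case 0
  then have "t = n - 1" by simp
  then show ?case using assms(1) by simp
next
  case (Suc d)
  have t: "Suc t < n" "q \<le> Suc t" using Suc by auto
  have "top_term (hecke_prod b (hchain z (Suc t) (n - 1)) M) (staircase_word n q (Suc t))
      (z ^ (n - 1 - Suc t) * c)"
    using Suc t by simp
  then have "top_term (hecke_h b t z (hecke_prod b (hchain z (Suc t) (n - 1)) M))
      (swap_pos (staircase_word n q (Suc t)) t) (z * (z ^ (n - 1 - Suc t) * c))"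
    by (rule top_term_hecke_h) (use t Suc.prems in \<open>auto simp: nth_staircase_word\<close>)
  moreover have "swap_pos (staircase_word n q (Suc t)) t = staircase_word n q t"
    using t Suc.prems by (auto intro!: nth_equalityI simp: nth_swap_pos nth_staircase_word swp_def)
  moreover have "n - 1 - t = Suc (n - 1 - Suc t)"
    using Suc.hyps(2) by simp
  then have "z * (z ^ (n - 1 - Suc t) * c) = z ^ (n - 1 - t) * c"
    by simp
  ultimately show ?case
    using hchain_split[of t "n - 1" z] t by (simp add: hecke_prod_snoc)
qed

lemma top_term_staircase:
  assumes "q \<le> n"
  shows "top_term (hecke_prod b (staircase n zs [0..<q]) (delta_id n)) (staircase_word n q (n - 1))
           (\<Prod>r<q. zs r ^ (n - 1 - r))"
  using assms
proof (induction q)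
  case 0
  have "staircase_word n 0 (n - 1) = [1..<Suc n]"
    by (auto intro!: nth_equalityI simp: nth_staircase_word simp del: upt_Suc)
  then show ?case using top_term_delta_id[of n] by (simp add: staircase_def del: upt_Suc)
next
  case (Suc q)
  have "staircase_word n q q = staircase_word n (Suc q) (n - 1)"
    using Suc.prems by (auto intro!: nth_equalityI simp: nth_staircase_word)
  moreover have "top_term (hecke_prod b (hchain (zs q) q (n - 1)) (hecke_prod b (staircase n zs [0..<q]) (delta_id n)))
      (staircase_word n q q) (zs q ^ (n - 1 - q) * (\<Prod>r<q. zs r ^ (n - 1 - r)))"
    by (rule top_term_hchain) (use Suc in auto)
  ultimately show ?case
    by (simp add: staircase_append staircase_def hecke_prod_append mult.commute)
qed

lemma fomin_kirillov_longest:
  "fomin_kirillov b n zs (rev [1..<Suc n]) = (\<Prod>r<n. zs r ^ (n - 1 - r))"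
proof -
  have "staircase_word n n (n - 1) = rev [1..<Suc n]"
    by (auto intro!: nth_equalityI simp: nth_staircase_word rev_nth simp del: upt_Suc)
  then show ?thesis
    using top_term_staircase[of n n b zs] by (simp add: top_term_def fomin_kirillov_def del: upt_Suc)
qed

lemma first_ascent:
  assumes "has_ascent w"
  shows "Suc (first_ascent w) < length w" "w ! first_ascent w < w ! Suc (first_ascent w)"
  using assms unfolding has_ascent_def first_ascent_def by (metis (mono_tags, lifting) LeastI_ex)+

lemma is_perm_no_ascent:
  assumes "is_perm w" "\<not> has_ascent w"
  shows "w = rev [1..<Suc (length w)]"
proof -
  have "w ! Suc i < w ! i" if "Suc i < length w" for i
    using assms that nth_eq_iff_index_eq[of w i "Suc i"]
    by (auto simp: has_ascent_def is_perm_def)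
  then have "sorted_wrt (>) w"
    by (subst sorted_wrt_iff_nth_Suc_transp) (auto simp: transp_def)
  then have "sorted_wrt (<) (rev w)"
    by (simp add: sorted_wrt_rev)
  moreover have "set (rev w) = set [1..<Suc (length w)]"
    using assms(1) by (simp add: is_perm_def atLeastLessThanSuc_atLeastAtMost del: upt_Suc)
  ultimately have "rev w = [1..<Suc (length w)]"
    by (intro strict_sorted_equal) (simp_all del: upt_Suc)
  then show ?thesis
    by (simp flip: rev_swap)
qed

lemma fk_groth_longest: "fk_groth \<beta> n (rev [1..<Suc n]) = groth_top n"
proof -
  have "fk_groth \<beta> n (rev [1..<Suc n]) = (\<Prod>r<n. Xv (Suc r) ^ (n - 1 - r))"
    using fomin_kirillov_longest[of "Poly_Mapping.single 0 \<beta>" n "\<lambda>q. Xv (Suc q)"]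
    by (simp add: fk_groth_def del: upt_Suc)
  also have "\<dots> = (\<Prod>i\<in>{1..<Suc n}. Xv i ^ (n - i))"
    by (rule prod.reindex_bij_witness[of _ "\<lambda>i. i - 1" Suc]) auto
  also have "\<dots> = groth_top n"
    by (cases n) (auto simp: groth_top_def prod.atLeastLessThan_Suc)
  finally show ?thesis .
qed

lemma fk_groth_no_ascent:
  assumes "is_perm w" "\<not> has_ascent w"
  shows "fk_groth \<beta> (length w) w = groth_top (length w)"
proof -
  have "fk_groth \<beta> (length w) w = fk_groth \<beta> (length w) (rev [1..<Suc (length w)])"
    using is_perm_no_ascent[OF assms] by (rule arg_cong)
  then show ?thesis by (simp only: fk_groth_longest)
qed

lemma groth_aux_eq_fk_groth:
  "is_perm w \<Longrightarrow> length w * length w \<le> card (inversions w) + k \<Longrightarrow> groth_aux k \<beta> w = fk_groth \<beta> (length w) w"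
proof (induction k arbitrary: w)
  case 0
  show ?case
  proof (cases "has_ascent w")
    case True
    then have "card (inversions (swap_pos w (first_ascent w))) = Suc (card (inversions w))"
      by (simp add: card_inversions_swap_pos first_ascent)
    then show ?thesis
      using 0 card_inversions_le[of "swap_pos w (first_ascent w)"] by simp
  next
    case False
    then show ?thesis
      using fk_groth_no_ascent[OF "0.prems"(1) False] by simp
  qed
next
  case (Suc k)
  show ?case
  proof (cases "has_ascent w")
    case True
    let ?i = "first_ascent w"
    let ?v = "swap_pos w ?i"
    have i: "Suc ?i < length w" "w ! ?i < w ! Suc ?i"
      using first_ascent[OF True] by auto
    have v: "is_perm ?v" "descent ?v ?i"
      using Suc.prems(1) i by (simp_all add: is_perm_def descent_def nth_swap_pos swp_def)
    have "groth_aux k \<beta> ?v = fk_groth \<beta> (length w) ?v"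
      using Suc.IH[OF v(1)] Suc.prems(2) card_inversions_swap_pos[OF i] by simp
    then have "groth_aux (Suc k) \<beta> w = piop \<beta> (Suc ?i) (fk_groth \<beta> (length w) ?v)"
      using True by simp
    also have "\<dots> = fk_groth \<beta> (length w) w"
      using piop_fk_groth[of ?i "length w" ?v] i v by (simp add: is_perm_def)
    finally show ?thesis .
  next
    case False
    then show ?thesis
      using fk_groth_no_ascent[OF Suc.prems(1) False] by simp
  qed
qed

lemma Upsilon_eq_fomin_kirillov:
  assumes "is_perm w"
  shows "Upsilon \<beta> w = fomin_kirillov \<beta> (length w) (\<lambda>_. 1) w"
proof (cases "w = []")
  case True
  then show ?thesis by (simp add: Upsilon_def fomin_kirillov_def staircase_def delta_id_def)
next
  case False
  have "groth \<beta> w = fk_groth \<beta> (length w) w"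
    unfolding groth_def using assms by (simp add: groth_aux_eq_fk_groth)
  moreover have "eval_ones (fk_groth \<beta> n w) = fomin_kirillov \<beta> n (\<lambda>_. 1) w" for n
    unfolding fk_groth_def
    by (subst fomin_kirillov_hom[where \<phi> = eval_ones])
       (simp_all add: eval_ones_add eval_ones_mult eval_ones_zero eval_ones_one eval_ones_single eval_ones_Xv comp_def)
  ultimately show ?thesis
    using False by (simp add: Upsilon_def)
qed

section \<open>Inversion exchanges the left and right actions\<close>

definition index_of :: "nat list \<Rightarrow> nat \<Rightarrow> nat" where
  "index_of w v = (LEAST j. j < length w \<and> w ! j = v)"

lemma index_of: "v \<in> set w \<Longrightarrow> index_of w v < length w \<and> w ! index_of w v = v"
  unfolding index_of_def by (rule LeastI_ex) (simp add: in_set_conv_nth)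

lemma index_of_eqI: "distinct w \<Longrightarrow> k < length w \<Longrightarrow> w ! k = v \<Longrightarrow> index_of w v = k"
  by (metis index_of nth_eq_iff_index_eq nth_mem)

lemma index_of_swap_pos:
  "distinct w \<Longrightarrow> Suc j < length w \<Longrightarrow> v \<in> set w \<Longrightarrow> index_of (swap_pos w j) v = swp j (index_of w v)"
  by (rule index_of_eqI) (auto simp: nth_swap_pos index_of swp_less)

text \<open>Left multiplication by the generator i exchanges the values i + 1 and i + 2.\<close>

definition swap_vals :: "nat \<Rightarrow> nat list \<Rightarrow> nat list" where
  "swap_vals i w = map (swp (Suc i)) w"

definition left_descent :: "nat list \<Rightarrow> nat \<Rightarrow> bool" where
  "left_descent w i \<longleftrightarrow> Suc i \<in> set w \<and> Suc (Suc i) \<in> set w \<and> index_of w (Suc (Suc i)) < index_of w (Suc i)"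

lemma length_swap_vals [simp]: "length (swap_vals i w) = length w"
  by (simp add: swap_vals_def)

lemma nth_swap_vals: "k < length w \<Longrightarrow> swap_vals i w ! k = swp (Suc i) (w ! k)"
  by (simp add: swap_vals_def)

lemma distinct_swap_vals [simp]: "distinct (swap_vals i w) = distinct w"
  by (simp add: swap_vals_def distinct_map inj_on_def) (metis inj_swp injD)

lemma swap_vals_swap_vals [simp]: "swap_vals i (swap_vals i w) = w"
  by (simp add: swap_vals_def comp_def)

lemma swap_vals_swap_pos: "Suc j < length w \<Longrightarrow> swap_vals i (swap_pos w j) = swap_pos (swap_vals i w) j"
  by (simp add: swap_vals_def swap_pos_def map_update)

lemma index_of_swap_vals:
  "distinct w \<Longrightarrow> swp (Suc i) v \<in> set w \<Longrightarrow> index_of (swap_vals i w) v = index_of w (swp (Suc i) v)"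
  by (rule index_of_eqI) (auto simp: nth_swap_vals index_of)

lemma swp_less_iff: "a \<noteq> b \<Longrightarrow> {a, b} \<noteq> {k, Suc k} \<Longrightarrow> swp k a < swp k b \<longleftrightarrow> a < b"
  by (auto simp: swp_def doubleton_eq_iff)

text \<open>The left generator i and the right generator j act on disjoint data unless the two
  entries at positions j, j+1 are exactly the values i+1, i+2; then both act as the same swap.\<close>

lemma left_descent_swap_pos:
  assumes "distinct w" "Suc j < length w" "{w ! j, w ! Suc j} \<noteq> {Suc i, Suc (Suc i)}"
  shows "left_descent (swap_pos w j) i = left_descent w i"
proof (cases "Suc i \<in> set w \<and> Suc (Suc i) \<in> set w")
  case True
  let ?a = "index_of w (Suc (Suc i))" and ?b = "index_of w (Suc i)"
  have "?a \<noteq> ?b" "{?a, ?b} \<noteq> {j, Suc j}"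
    using True assms(3) index_of[of "Suc i" w] index_of[of "Suc (Suc i)" w]
    by (auto simp: doubleton_eq_iff)
  then show ?thesis
    using True assms(1,2) by (simp add: left_descent_def index_of_swap_pos swp_less_iff)
next
  case False
  then show ?thesis using assms(2) by (auto simp: left_descent_def)
qed

lemma descent_swap_vals:
  assumes "distinct w" "Suc j < length w" "{w ! j, w ! Suc j} \<noteq> {Suc i, Suc (Suc i)}"
  shows "descent (swap_vals i w) j = descent w j"
proof -
  have "w ! j \<noteq> w ! Suc j"
    using assms(1,2) nth_eq_iff_index_eq[of w j "Suc j"] by auto
  moreover have "{w ! Suc j, w ! j} \<noteq> {Suc i, Suc (Suc i)}"
    using assms(3) by (auto simp: doubleton_eq_iff)
  ultimately show ?thesis
    using assms(2) by (simp add: descent_def nth_swap_vals swp_less_iff)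
qed

lemma swap_vals_eq_swap_pos:
  assumes "distinct w" "Suc j < length w" "{w ! j, w ! Suc j} = {Suc i, Suc (Suc i)}"
  shows "swap_vals i w = swap_pos w j"
proof (rule nth_equalityI)
  fix k assume "k < length (swap_vals i w)"
  moreover have "k \<noteq> j \<Longrightarrow> k \<noteq> Suc j \<Longrightarrow> k < length w \<Longrightarrow> w ! k \<noteq> w ! j \<and> w ! k \<noteq> w ! Suc j"
    using assms(1,2) nth_eq_iff_index_eq[of w k j] nth_eq_iff_index_eq[of w k "Suc j"] by auto
  ultimately show "swap_vals i w ! k = swap_pos w j ! k"
    using assms(2,3) by (auto simp: nth_swap_vals nth_swap_pos swp_def doubleton_eq_iff)
qed simp

lemma left_descent_eq_descent:
  assumes "distinct w" "Suc j < length w" "{w ! j, w ! Suc j} = {Suc i, Suc (Suc i)}"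
  shows "left_descent w i = descent w j"
proof -
  have "{Suc i, Suc (Suc i)} \<subseteq> set w"
    using assms(2) by (simp flip: assms(3))
  moreover have "index_of w (w ! j) = j" "index_of w (w ! Suc j) = Suc j"
    using assms(1,2) by (simp_all add: index_of_eqI)
  ultimately show ?thesis
    using assms(2,3) by (auto simp: left_descent_def descent_def doubleton_eq_iff)
qed

definition hecke_lu :: "'a::comm_ring_1 \<Rightarrow> nat \<Rightarrow> (nat list \<Rightarrow> 'a) \<Rightarrow> nat list \<Rightarrow> 'a" where
  "hecke_lu b i M w = (if distinct w \<and> left_descent w i then M (swap_vals i w) + b * M w else 0)"

definition hecke_lh :: "'a::comm_ring_1 \<Rightarrow> nat \<Rightarrow> 'a \<Rightarrow> (nat list \<Rightarrow> 'a) \<Rightarrow> nat list \<Rightarrow> 'a" where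
  "hecke_lh b i z M = (\<lambda>w. M w + z * hecke_lu b i M w)"

lemma hecke_lu_u_commute: "hecke_lu b i (hecke_u b j M) w = hecke_u b j (hecke_lu b i M) w"
proof (cases "distinct w \<and> Suc j < length w")
  case True
  then have w: "distinct w" "Suc j < length w" by auto
  show ?thesis
  proof (cases "{w ! j, w ! Suc j} = {Suc i, Suc (Suc i)}")
    case True
    have "{swap_pos w j ! j, swap_pos w j ! Suc j} = {Suc i, Suc (Suc i)}"
      using w True by (auto simp: nth_swap_pos swp_def)
    then have "left_descent (swap_pos w j) i = descent (swap_pos w j) j"
      using w by (intro left_descent_eq_descent) simp_all
    then show ?thesis
      using w True swap_vals_eq_swap_pos[OF w True] left_descent_eq_descent[OF w True]
      by (cases "descent w j") (simp_all add: hecke_lu_def hecke_u_def swap_vals_swap_pos descent_def nth_swap_pos swp_def)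
  next
    case False
    then show ?thesis
      using w left_descent_swap_pos[OF w False] descent_swap_vals[OF w False]
      by (simp add: hecke_lu_def hecke_u_def swap_vals_swap_pos algebra_simps)
  qed
next
  case False
  then show ?thesis by (auto simp: hecke_lu_def hecke_u_def descent_def)
qed

lemma length_perm_inv [simp]: "length (perm_inv w) = length w"
  by (simp add: perm_inv_def del: upt_Suc)

lemma nth_perm_inv: "k < length w \<Longrightarrow> perm_inv w ! k = Suc (index_of w (Suc k))"
  by (simp add: perm_inv_def index_of_def nth_map_upt del: upt_Suc)

lemma is_perm_mem_iff: "is_perm w \<Longrightarrow> v \<in> set w \<longleftrightarrow> 1 \<le> v \<and> v \<le> length w"
  by (auto simp: is_perm_def)

lemma is_perm_nth_bounds: "is_perm w \<Longrightarrow> i < length w \<Longrightarrow> 0 < w ! i \<and> w ! i \<le> length w"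
  using nth_mem[of i w] by (auto simp: is_perm_def)

lemma perm_inv_nth_nth: "is_perm w \<Longrightarrow> k < length w \<Longrightarrow> perm_inv w ! (w ! k - 1) = Suc k"
  using is_perm_mem_iff[of w "w ! k"] nth_mem[of k w] nth_perm_inv[of "w ! k - 1" w] index_of_eqI[of w k]
  by (auto simp: is_perm_def)

lemma is_perm_perm_inv:
  assumes "is_perm w"
  shows "is_perm (perm_inv w)"
proof -
  have "index_of w (Suc k) < length w" if "k < length w" for k
    using index_of[of "Suc k" w] assms that by (simp add: is_perm_mem_iff)
  then have "set (perm_inv w) \<subseteq> {1..length w}"
    by (auto simp: in_set_conv_nth nth_perm_inv Suc_leI)
  moreover have "distinct (perm_inv w)"
  proof (subst distinct_conv_nth, intro allI impI)
    fix i j assume ij: "i < length (perm_inv w)" "j < length (perm_inv w)" "i \<noteq> j"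
    then have "index_of w (Suc i) \<noteq> index_of w (Suc j)"
      using assms index_of by (metis Suc_inject Suc_leI is_perm_mem_iff le_add1 length_perm_inv plus_1_eq_Suc)
    then show "perm_inv w ! i \<noteq> perm_inv w ! j"
      using ij by (simp add: nth_perm_inv)
  qed
  ultimately show ?thesis
    by (simp add: is_perm_def card_subset_eq distinct_card)
qed

lemma perm_inv_perm_inv:
  assumes "is_perm w"
  shows "perm_inv (perm_inv w) = w"
proof (rule nth_equalityI)
  fix k assume "k < length (perm_inv (perm_inv w))"
  then have k: "k < length w" by simp
  have v: "1 \<le> w ! k" "w ! k \<le> length w"
    using assms nth_mem[OF k] by (auto simp: is_perm_def)
  then have "index_of (perm_inv w) (Suc k) = w ! k - 1"
    using is_perm_perm_inv[OF assms] perm_inv_nth_nth[OF assms k]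
    by (intro index_of_eqI) (auto simp: is_perm_def)
  then show "perm_inv (perm_inv w) ! k = w ! k"
    using k v by (simp add: nth_perm_inv)
qed simp

lemma descent_perm_inv: "is_perm w \<Longrightarrow> descent (perm_inv w) i \<longleftrightarrow> left_descent w i"
  by (auto simp: descent_def left_descent_def nth_perm_inv is_perm_mem_iff)

lemma is_perm_swap_vals:
  assumes "is_perm w" "left_descent w i"
  shows "is_perm (swap_vals i w)"
proof -
  have "Suc (Suc i) \<le> length w"
    using assms by (auto simp: left_descent_def is_perm_mem_iff)
  then have "swp (Suc i) ` {1..length w} = {1..length w}"
    by (auto simp: swp_def image_iff)
  then show ?thesis
    using assms(1) distinct_swap_vals[of i w] by (simp add: is_perm_def swap_vals_def)
qed

lemma perm_inv_swap_vals:
  assumes "is_perm w" "left_descent w i"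
  shows "perm_inv (swap_vals i w) = swap_pos (perm_inv w) i"
proof (rule nth_equalityI)
  have i: "Suc i < length w"
    using assms by (auto simp: left_descent_def is_perm_mem_iff)
  fix k assume "k < length (perm_inv (swap_vals i w))"
  then have k: "k < length w" by simp
  have "swp (Suc i) (Suc k) \<in> set w"
    using assms(1) i k by (auto simp: is_perm_mem_iff swp_def)
  then have "index_of (swap_vals i w) (Suc k) = index_of w (Suc (swp i k))"
    using assms(1) by (simp add: index_of_swap_vals is_perm_def swp_def)
  then show "perm_inv (swap_vals i w) ! k = swap_pos (perm_inv w) i ! k"
    using i k by (simp add: nth_perm_inv nth_swap_pos swp_less)
qed simp

lemma hecke_h_perm_inv:
  assumes w: "is_perm w" and N: "\<And>v. is_perm v \<Longrightarrow> length v = length w \<Longrightarrow> N v = M (perm_inv v)"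
  shows "hecke_h b i z M (perm_inv w) = hecke_lh b i z N w"
proof (cases "left_descent w i")
  case True
  then have "N (swap_vals i w) = M (swap_pos (perm_inv w) i)"
    using N w is_perm_swap_vals perm_inv_swap_vals by simp
  then show ?thesis
    using True w N is_perm_perm_inv[OF w]
    by (simp add: hecke_h_def hecke_lh_def hecke_u_def hecke_lu_def descent_perm_inv is_perm_def)
next
  case False
  then show ?thesis
    using w N by (simp add: hecke_h_def hecke_lh_def hecke_u_def hecke_lu_def descent_perm_inv)
qed

definition hecke_lprod :: "'a::comm_ring_1 \<Rightarrow> (nat \<times> 'a) list \<Rightarrow> (nat list \<Rightarrow> 'a) \<Rightarrow> nat list \<Rightarrow> 'a" where
  "hecke_lprod b ws M = foldl (\<lambda>N (j, z). hecke_lh b j z N) M ws"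

lemma hecke_lprod_Cons [simp]: "hecke_lprod b ((j, z) # ws) M = hecke_lprod b ws (hecke_lh b j z M)"
  by (simp add: hecke_lprod_def)

lemma hecke_lprod_snoc: "hecke_lprod b (ws @ [(j, z)]) M = hecke_lh b j z (hecke_lprod b ws M)"
  by (simp add: hecke_lprod_def)

lemma hecke_prod_perm_inv:
  assumes "is_perm w" "\<And>v. is_perm v \<Longrightarrow> length v = length w \<Longrightarrow> N v = M (perm_inv v)"
  shows "hecke_prod b ws M (perm_inv w) = hecke_lprod b ws N w"
  using assms(2)
proof (induction ws arbitrary: M N)
  case Nil
  then show ?case using assms(1) by (simp add: hecke_lprod_def)
next
  case (Cons jz ws)
  obtain j z where jz: "jz = (j, z)" by fastforce
  have "hecke_lh b j z N v = hecke_h b j z M (perm_inv v)" if "is_perm v" "length v = length w" for v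
    using hecke_h_perm_inv[OF that(1), of N M] Cons.prems that by simp
  then show ?case using Cons.IH[of "hecke_lh b j z N" "hecke_h b j z M"] by (simp add: jz)
qed

lemma hecke_lh_h_commute: "hecke_lh b i z (hecke_h b j y M) = hecke_h b j y (hecke_lh b i z M)"
proof -
  have "hecke_lu b i (\<lambda>v. f v + c * g v) w = hecke_lu b i f w + c * hecke_lu b i g w" for f g c w
    by (simp add: hecke_lu_def algebra_simps)
  then show ?thesis
    by (simp add: fun_eq_iff hecke_lh_def hecke_h_def hecke_u_add hecke_u_scale hecke_lu_u_commute algebra_simps)
qed

lemma hecke_lh_prod_commute: "hecke_lh b i z (hecke_prod b ws M) = hecke_prod b ws (hecke_lh b i z M)"
  by (induction ws arbitrary: M) (auto simp: hecke_lh_h_commute)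

lemma nth_upt_Suc: "k < n \<Longrightarrow> [Suc 0..<Suc n] ! k = Suc k"
  by (simp del: upt_Suc)

lemma hecke_u_delta_id:
  assumes "Suc j < n"
  shows "hecke_u b j (delta_id n) w = (if w = swap_pos [1..<Suc n] j then 1 else 0)"
proof -
  have id: "distinct [1..<Suc n]" "\<not> descent [1..<Suc n] j"
    by (auto simp: descent_def nth_upt_Suc simp del: upt_Suc)
  have s: "distinct (swap_pos [1..<Suc n] j)" "descent (swap_pos [1..<Suc n] j) j"
    using assms by (auto simp: descent_def nth_swap_pos swp_def nth_upt_Suc simp del: upt_Suc)
  show ?thesis
  proof (cases "distinct w \<and> descent w j")
    case True
    then have "swap_pos w j = [1..<Suc n] \<longleftrightarrow> w = swap_pos [1..<Suc n] j"
      by (metis descent_def length_swap_pos swap_pos_swap_pos)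
    then show ?thesis
      using True id by (auto simp: hecke_u_def delta_id_def)
  next
    case False
    then show ?thesis using s by (auto simp: hecke_u_def)
  qed
qed

lemma hecke_lu_delta_id:
  assumes "Suc j < n"
  shows "hecke_lu b j (delta_id n) w = (if w = swap_pos [1..<Suc n] j then 1 else 0)"
proof -
  let ?s = "swap_pos [1..<Suc n] j"
  have id: "distinct [1..<Suc n]" "\<not> left_descent [1..<Suc n] j"
    using index_of_eqI[of "[1..<Suc n]" j "Suc j"] index_of_eqI[of "[1..<Suc n]" "Suc j" "Suc (Suc j)"]
    by (auto simp: left_descent_def nth_upt_Suc simp del: upt_Suc)
  have pair: "{[1..<Suc n] ! j, [1..<Suc n] ! Suc j} = {Suc j, Suc (Suc j)}"
    using assms by (simp add: nth_upt_Suc del: upt_Suc)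
  have sv: "swap_vals j [1..<Suc n] = ?s"
    using swap_vals_eq_swap_pos[OF id(1) _ pair] assms by simp
  have s: "distinct ?s" "left_descent ?s j"
  proof -
    have "{?s ! j, ?s ! Suc j} = {Suc j, Suc (Suc j)}" "descent ?s j"
      using assms by (auto simp: descent_def nth_swap_pos swp_def nth_upt_Suc simp del: upt_Suc)
    then show "distinct ?s" "left_descent ?s j"
      using assms left_descent_eq_descent[of ?s j j] by (simp_all del: upt_Suc)
  qed
  show ?thesis
  proof (cases "distinct w \<and> left_descent w j")
    case True
    have "swap_vals j w = [1..<Suc n] \<longleftrightarrow> w = ?s"
      by (metis sv swap_vals_swap_vals)
    then show ?thesis
      using True id by (auto simp: hecke_lu_def delta_id_def)
  next
    case False
    then show ?thesis using s by (auto simp: hecke_lu_def)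
  qed
qed

lemma hecke_lprod_delta_id:
  "\<forall>(j, z) \<in> set ws. Suc j < n \<Longrightarrow> hecke_lprod b ws (delta_id n) = hecke_prod b (rev ws) (delta_id n)"
proof (induction ws rule: rev_induct)
  case (snoc jz ws)
  obtain j z where jz: "jz = (j, z)" by fastforce
  then have "hecke_lh b j z (delta_id n) = hecke_h b j z (delta_id n)"
    using snoc.prems by (simp add: fun_eq_iff hecke_lh_def hecke_h_def hecke_u_delta_id hecke_lu_delta_id)
  then show ?case
    using snoc by (simp add: jz hecke_lprod_snoc hecke_lh_prod_commute)
qed (simp add: hecke_lprod_def)

section \<open>Invariance of Upsilon under inversion\<close>

lemma filter_pair_Cons_split:
  assumes "\<forall>c. filter (\<lambda>x. x = c \<or> x = Suc c) (a # u) = filter (\<lambda>x. x = c \<or> x = Suc c) v"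
  obtains v1 v2 where "v = v1 @ a # v2" "\<forall>x \<in> set v1. far a x"
    "\<forall>c. filter (\<lambda>x. x = c \<or> x = Suc c) u = filter (\<lambda>x. x = c \<or> x = Suc c) (v1 @ v2)"
proof -
  let ?P = "\<lambda>c x. x = c \<or> x = Suc c"
  have eq: "filter (?P c) (a # u) = filter (?P c) v" for c
    using assms by blast
  have "a \<in> set (filter (?P a) v)"
    unfolding eq[of a, symmetric] by simp
  then obtain v1 v2 where v: "v = v1 @ a # v2" and a: "a \<notin> set v1"
    using split_list_first[of a v] by auto
  have no_P: "filter (?P c) v1 = []" if "?P c a" for c
  proof (rule ccontr)
    assume "filter (?P c) v1 \<noteq> []"
    then obtain x xs where x: "filter (?P c) v1 = x # xs"
      by (cases "filter (?P c) v1") auto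
    have "a # filter (?P c) u = filter (?P c) v1 @ a # filter (?P c) v2"
      using eq[of c] that by (simp add: v)
    then have "x = a"
      by (simp add: x)
    moreover have "x \<in> set v1"
      using x by (metis filter_is_subset list.set_intros(1) subsetD)
    ultimately show False using a by simp
  qed
  have "far a x" if "x \<in> set v1" for x
  proof (rule ccontr)
    txt \<open>A neighbour of a before its first occurrence in v would come first in the projection
      of v to their pair, but a comes first in the projection of a # u.\<close>
    assume "\<not> far a x"
    moreover have "x \<noteq> a" using a that by auto
    ultimately have "?P (min a x) a" "?P (min a x) x"
      by (auto simp: far_def)
    then have "x \<in> set (filter (?P (min a x)) v1)"
      using that by simp
    then show False
      using no_P[OF \<open>?P (min a x) a\<close>] by simp
  qed
  moreover have "filter (?P c) u = filter (?P c) (v1 @ v2)" for c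
  proof (cases "?P c a")
    case True
    then show ?thesis using eq[of c] no_P[OF True] by (simp add: v)
  next
    case False
    then show ?thesis using eq[of c] by (simp add: v)
  qed
  ultimately show ?thesis
    using that[OF v] by blast
qed

lemma hecke_prod_filter_pair_eq:
  assumes "\<forall>c. filter (\<lambda>x. x = c \<or> x = Suc c) u = filter (\<lambda>x. x = c \<or> x = Suc c) v"
  shows "hecke_prod b (map (\<lambda>j. (j, z)) u) M = hecke_prod b (map (\<lambda>j. (j, z)) v) M"
  using assms
proof (induction u arbitrary: v M)
  case Nil
  have "x \<notin> set v" for x
    using Nil[rule_format, of x] filter_empty_conv[of "\<lambda>y. y = x \<or> y = Suc x" v] by auto
  then have "v = []"
    by (metis list.set_intros(1) list.exhaust)
  then show ?case by simp
next
  case (Cons a u)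
  obtain v1 v2 where v: "v = v1 @ a # v2" and far_a: "\<forall>x \<in> set v1. far a x"
    and u: "\<forall>c. filter (\<lambda>x. x = c \<or> x = Suc c) u = filter (\<lambda>x. x = c \<or> x = Suc c) (v1 @ v2)"
    by (rule filter_pair_Cons_split[OF Cons.prems])
  have "hecke_h b a z (hecke_prod b (map (\<lambda>j. (j, z)) v1) M) = hecke_prod b (map (\<lambda>j. (j, z)) v1) (hecke_h b a z M)"
    using far_a by (intro hecke_h_prod_commute) auto
  then show ?case
    using Cons.IH[OF u, of "hecke_h b a z M"] by (simp add: v hecke_prod_append)
qed

definition staircase_indices :: "nat \<Rightarrow> nat list" where
  "staircase_indices n = concat (map (\<lambda>q. rev [q..<n - 1]) [0..<n])"

lemma fomin_kirillov_const:
  "fomin_kirillov b n (\<lambda>_. z) = hecke_prod b (map (\<lambda>j. (j, z)) (staircase_indices n)) (delta_id n)"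
proof -
  have "staircase n (\<lambda>_. z) qs = map (\<lambda>j. (j, z)) (concat (map (\<lambda>q. rev [q..<n - 1]) qs))" for qs
    by (induction qs) (auto simp: staircase_def hchain_def)
  then show ?thesis by (simp add: fomin_kirillov_def staircase_indices_def)
qed

lemma filter_pair_upt:
  "filter (\<lambda>x. x = c \<or> x = Suc c) [q..<m] = filter (\<lambda>x. q \<le> x \<and> x < m) [c, Suc c]"
  by (induction m) auto

lemma rev_concat_replicate_pair:
  "rev (concat (replicate k [x, y]) @ [x]) = concat (replicate k [x, y]) @ [x]"
proof (induction k)
  case (Suc k)
  let ?R = "concat (replicate k [x, y])"
  have "?R @ [x, y] = [x, y] @ ?R"
    by (induction k) simp_all
  have "rev (concat (replicate (Suc k) [x, y]) @ [x]) = rev (?R @ [x]) @ [y, x]"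
    by simp
  also have "\<dots> = (?R @ [x, y]) @ [x]"
    by (simp only: Suc.IH) simp
  also have "\<dots> = concat (replicate (Suc k) [x, y]) @ [x]"
    by (simp only: \<open>?R @ [x, y] = [x, y] @ ?R\<close>) simp
  finally show ?case .
qed simp

lemma rev_filter_pair_staircase_indices:
  "rev (filter (\<lambda>x. x = c \<or> x = Suc c) (staircase_indices n)) = filter (\<lambda>x. x = c \<or> x = Suc c) (staircase_indices n)"
  (is "rev ?f = ?f")
proof (cases "Suc c < n - 1")
  case False
  then have "?f = filter (\<lambda>x. c = x) (staircase_indices n)"
    by (intro filter_cong) (auto simp: staircase_indices_def)
  then show ?thesis
    by (metis replicate_length_filter rev_replicate)
next
  case True
  let ?g = "\<lambda>q. rev (filter (\<lambda>x. q \<le> x \<and> x < n - 1) [c, Suc c])"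
  have "?f = concat (map ?g ([0..<Suc c] @ Suc c # [Suc (Suc c)..<n]))"
    using True upt_split_pair[of c n]
    by (simp add: staircase_indices_def filter_concat comp_def filter_pair_upt flip: rev_filter)
  also have "\<dots> = concat (replicate (Suc c) [Suc c, c]) @ [Suc c]"
  proof -
    have "concat (map ?g [0..<k]) = concat (replicate k [Suc c, c])" if "k \<le> Suc c" for k
      using that True by (induction k) (simp_all add: replicate_append_same[symmetric])
    moreover have "?g (Suc c) = [Suc c]" "concat (map ?g [Suc (Suc c)..<n]) = []"
      using True by auto
    ultimately show ?thesis
      by (simp only: map_append list.map concat_append concat.simps append_Nil2 order_refl)
  qed
  finally have f: "?f = concat (replicate (Suc c) [Suc c, c]) @ [Suc c]" .
  show ?thesis
    unfolding f by (rule rev_concat_replicate_pair)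
qed

lemma perm_inv_id: "perm_inv [1..<Suc n] = [1..<Suc n]"
proof (rule nth_equalityI)
  fix k assume "k < length (perm_inv [1..<Suc n])"
  then have k: "k < n" by (simp del: upt_Suc)
  then have "index_of [1..<Suc n] (Suc k) = k"
    by (intro index_of_eqI) (simp_all add: nth_upt_Suc del: upt_Suc)
  then show "perm_inv [1..<Suc n] ! k = [1..<Suc n] ! k"
    using k by (simp add: nth_perm_inv nth_upt_Suc del: upt_Suc)
qed (simp del: upt_Suc)

lemma delta_id_perm_inv: "is_perm v \<Longrightarrow> delta_id (length v) (perm_inv v) = delta_id (length v) v"
  by (metis delta_id_def perm_inv_id perm_inv_perm_inv)

text \<open>Inversion turns the staircase product into its reverse, acting on the left; on the
  identity the left action is the right action; and the reversed staircase word has the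
  same projections to all pairs {c, c+1}, hence equals it up to commutations.\<close>

lemma fomin_kirillov_perm_inv:
  assumes "is_perm w"
  shows "fomin_kirillov b (length w) (\<lambda>_. z) (perm_inv w) = fomin_kirillov b (length w) (\<lambda>_. z) w"
proof -
  let ?n = "length w" and ?zs = "\<lambda>js. map (\<lambda>j. (j, z)) js"
  have "fomin_kirillov b ?n (\<lambda>_. z) (perm_inv w) = hecke_prod b (?zs (staircase_indices ?n)) (delta_id ?n) (perm_inv w)"
    by (simp add: fomin_kirillov_const)
  also have "\<dots> = hecke_lprod b (?zs (staircase_indices ?n)) (delta_id ?n) w"
    using assms by (intro hecke_prod_perm_inv) (metis delta_id_perm_inv)+
  also have "\<dots> = hecke_prod b (?zs (rev (staircase_indices ?n))) (delta_id ?n) w"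
    by (subst hecke_lprod_delta_id) (auto simp: staircase_indices_def rev_map)
  also have "\<dots> = hecke_prod b (?zs (staircase_indices ?n)) (delta_id ?n) w"
    by (subst hecke_prod_filter_pair_eq[where v = "staircase_indices ?n"])
       (simp_all add: rev_filter_pair_staircase_indices flip: rev_filter)
  also have "\<dots> = fomin_kirillov b ?n (\<lambda>_. z) w"
    by (simp add: fomin_kirillov_const)
  finally show ?thesis .
qed

lemma Upsilon_perm_inv: "is_perm w \<Longrightarrow> Upsilon \<beta> (perm_inv w) = Upsilon \<beta> w"
  using Upsilon_eq_fomin_kirillov[of "perm_inv w"] Upsilon_eq_fomin_kirillov[of w]
    fomin_kirillov_perm_inv[of w] is_perm_perm_inv[of w]
  by simp

section \<open>Patterns and inverses\<close>

lemma card_le_nth_strict_sorted: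
  fixes l :: "'a::linorder list"
  assumes s: "sorted_wrt (<) l" and k: "k < length l"
  shows "card {y \<in> set l. y \<le> l ! k} = Suc k"
proof -
  have "{y \<in> set l. y \<le> l ! k} = set (take (Suc k) l)"
  proof (intro equalityI subsetI)
    fix y assume "y \<in> {y \<in> set l. y \<le> l ! k}"
    then obtain j where j: "j < length l" "y = l ! j" "l ! j \<le> l ! k"
      by (auto simp: in_set_conv_nth)
    have "j \<le> k"
    proof (rule ccontr)
      assume "\<not> j \<le> k"
      then have "l ! k < l ! j" using s j k by (simp add: sorted_wrt_iff_nth_less)
      then show False using j by simp
    qed
    then show "y \<in> set (take (Suc k) l)"
      using j by (auto simp: in_set_conv_nth intro!: exI[of _ j])
  next
    fix y assume "y \<in> set (take (Suc k) l)"
    then obtain j where j: "j < Suc k" "j < length l" "y = l ! j"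
      by (auto simp: in_set_conv_nth)
    have "l ! j \<le> l ! k"
      using s j k by (cases "j = k") (auto simp: sorted_wrt_iff_nth_less less_imp_le)
    then show "y \<in> {y \<in> set l. y \<le> l ! k}" using j by auto
  qed
  then show ?thesis
    using s k by (simp add: distinct_card strict_sorted_iff)
qed

lemma nth_std:
  assumes "a < length v"
  shows "std v ! a = Suc (index_of (sorted_list_of_set (set v)) (v ! a))"
proof -
  let ?l = "sorted_list_of_set (set v)"
  have "v ! a \<in> set ?l"
    using assms by simp
  then have "?l ! index_of ?l (v ! a) = v ! a" "index_of ?l (v ! a) < length ?l"
    using index_of by blast+
  then show ?thesis
    using assms card_le_nth_strict_sorted[of ?l "index_of ?l (v ! a)"]
    by (simp add: std_def)
qed

lemma length_std [simp]: "length (std v) = length v"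
  by (simp add: std_def)

lemma is_perm_std:
  assumes "distinct v"
  shows "is_perm (std v)"
proof -
  let ?l = "sorted_list_of_set (set v)"
  let ?r = "\<lambda>x. Suc (index_of ?l x)"
  have l: "distinct ?l" "length ?l = length v" "set ?l = set v"
    using assms by (simp_all add: distinct_card)
  have std: "std v = map ?r v"
    by (rule nth_equalityI) (simp_all add: nth_std)
  have inj: "inj_on ?r (set v)"
  proof
    fix x y assume "x \<in> set v" "y \<in> set v" "?r x = ?r y"
    then have "index_of ?l x = index_of ?l y" by simp
    then show "x = y" using \<open>x \<in> set v\<close> \<open>y \<in> set v\<close> index_of[of x ?l] index_of[of y ?l] l(3) by metis
  qed
  have idx: "index_of ?l ` set ?l = {..<length ?l}"
  proof
    show "index_of ?l ` set ?l \<subseteq> {..<length ?l}"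
      by (rule image_subsetI) (simp add: index_of del: length_sorted_list_of_set)
    show "{..<length ?l} \<subseteq> index_of ?l ` set ?l"
    proof
      fix k assume "k \<in> {..<length ?l}"
      then show "k \<in> index_of ?l ` set ?l"
        using l(1) by (metis image_eqI index_of_eqI lessThan_iff nth_mem)
    qed
  qed
  have "?r ` set v = Suc ` (index_of ?l ` set ?l)"
    using l(3) by (simp add: image_image)
  also have "\<dots> = {1..length v}"
    by (simp only: idx l(2) image_Suc_lessThan)
  finally show ?thesis
    using assms std inj by (simp add: is_perm_def distinct_map)
qed

lemma std_map_Suc: "std (map Suc v) = std v"
proof -
  have "{y \<in> Suc ` set v. y \<le> Suc x} = Suc ` {y \<in> set v. y \<le> x}" for x
    by auto
  then show ?thesis
    by (simp add: std_def card_image)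
qed

lemma nths_conv_sorted_list_of_set:
  assumes "S \<subseteq> {..<length xs}"
  shows "nths xs S = map ((!) xs) (sorted_list_of_set S)"
proof -
  have "zip xs [0..<length xs] = map (\<lambda>i. (xs ! i, i)) [0..<length xs]"
    by (rule nth_equalityI) auto
  then have "nths xs S = map ((!) xs) (filter (\<lambda>i. i \<in> S) [0..<length xs])"
    by (simp add: nths_def filter_map comp_def)
  also have "filter (\<lambda>i. i \<in> S) [0..<length xs] = sorted_list_of_set S"
    using assms finite_subset[OF assms] by (intro strict_sorted_equal[symmetric]) (auto simp: sorted_wrt_filter)
  finally show ?thesis .
qed

lemma perm_inv_std_map:
  assumes "finite S" "inj_on g S"
  shows "perm_inv (std (map g (sorted_list_of_set S)))
       = std (map (inv_into S g) (sorted_list_of_set (g ` S)))"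
proof (rule nth_equalityI)
  let ?e = "sorted_list_of_set S" and ?f = "sorted_list_of_set (g ` S)" and ?h = "inv_into S g"
  let ?p = "std (map g ?e)"
  show "length (perm_inv ?p) = length (std (map ?h ?f))"
    using assms by (simp add: card_image)
  fix b assume "b < length (perm_inv ?p)"
  then have b: "b < length ?f"
    using assms by (simp add: card_image)
  define a where "a = index_of ?e (?h (?f ! b))"
  have fb: "?f ! b \<in> g ` S"
    using b assms(1) nth_mem[OF b] by simp
  then have "?h (?f ! b) \<in> set ?e"
    using assms(1) by (simp add: inv_into_into)
  then have a: "a < length ?e" "?e ! a = ?h (?f ! b)"
    using index_of a_def by blast+
  have "g (?e ! a) = ?f ! b"
    using a fb by (simp add: f_inv_into_f)
  then have "?p ! a = Suc b"
    using a b assms by (simp add: nth_std index_of_eqI)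
  then have "index_of ?p (Suc b) = a"
    using a assms is_perm_std[of "map g ?e"] by (intro index_of_eqI) (simp_all add: is_perm_def distinct_map inj_on_subset)
  then have "perm_inv ?p ! b = Suc a"
    using a b assms by (simp add: nth_perm_inv card_image)
  also have "\<dots> = std (map ?h ?f) ! b"
    using b assms by (simp add: nth_std a_def)
  finally show "perm_inv ?p ! b = std (map ?h ?f) ! b" .
qed

lemma bij_betw_nth_minus_one:
  assumes "is_perm w"
  shows "bij_betw (\<lambda>i. w ! i - 1) {..<length w} {..<length w}"
proof -
  have "inj_on (\<lambda>i. w ! i - 1) {..<length w}"
  proof
    fix x y assume xy: "x \<in> {..<length w}" "y \<in> {..<length w}" "w ! x - 1 = w ! y - 1"
    then have "x < length w" "y < length w"
      by auto
    then have "w ! x = w ! y"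
      using xy(3) is_perm_nth_bounds[OF assms, of x] is_perm_nth_bounds[OF assms, of y] by linarith
    then show "x = y"
      using xy assms nth_eq_iff_index_eq[of w x y] by (simp add: is_perm_def)
  qed
  moreover have "(\<lambda>i. w ! i - 1) ` {..<length w} \<subseteq> {..<length w}"
    using is_perm_nth_bounds[OF assms] by fastforce
  ultimately show ?thesis
    by (simp add: bij_betw_def endo_inj_surj)
qed

text \<open>The positions of w^-1 are the values of w, shifted to start at 0.\<close>

lemma std_nths_perm_inv:
  assumes w: "is_perm w" and S: "S \<subseteq> {..<length w}"
  shows "std (nths (perm_inv w) ((\<lambda>i. w ! i - 1) ` S)) = perm_inv (std (nths w S))"
proof -
  let ?g = "\<lambda>i. w ! i - 1"
  have bij: "bij_betw ?g {..<length w} {..<length w}"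
    by (rule bij_betw_nth_minus_one[OF w])
  then have inj: "inj_on ?g S" and gS: "?g ` S \<subseteq> {..<length w}"
    using S by (auto simp: bij_betw_def inj_on_subset)
  have fin: "finite S"
    using S finite_subset by blast
  have "nths w S = map Suc (map ?g (sorted_list_of_set S))"
    using S fin is_perm_nth_bounds[OF w] by (auto simp: nths_conv_sorted_list_of_set)
  moreover have "nths (perm_inv w) (?g ` S) = map Suc (map (inv_into S ?g) (sorted_list_of_set (?g ` S)))"
  proof -
    have "perm_inv w ! t = Suc (inv_into S ?g t)" if t: "t \<in> ?g ` S" for t
    proof -
      obtain i where i: "i \<in> S" "t = ?g i"
        using t by blast
      have "inv_into S ?g t = i"
        using inv_into_f_f[OF inj i(1)] i(2) by simp
      moreover have "i < length w"
        using i(1) S by auto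
      ultimately show ?thesis
        using perm_inv_nth_nth[OF w, of i] i(2) by simp
    qed
    then show ?thesis
      using gS fin by (simp add: nths_conv_sorted_list_of_set)
  qed
  ultimately show ?thesis
    by (simp only: std_map_Suc perm_inv_std_map[OF fin inj])
qed

theorem mainTheorem4:
  fixes w :: "nat list" and \<beta> :: real
  assumes "is_perm w"
  shows "cw \<beta> w = cw \<beta> (perm_inv w)"
proof -
  let ?n = "length w" and ?g = "\<lambda>i. w ! i - 1"
  let ?term = "\<lambda>T. (-1) ^ (?n - card T) * Upsilon \<beta> (std (nths (perm_inv w) T))"
  have bij: "bij_betw ?g {..<?n} {..<?n}"
    by (rule bij_betw_nth_minus_one[OF assms])
  have "cw \<beta> (perm_inv w) = (\<Sum>S\<in>Pow {..<?n}. ?term (?g ` S))"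
    unfolding cw_def length_perm_inv
    by (rule sum.reindex_bij_betw[OF bij_betw_image_Pow[OF bij], symmetric])
  also have "\<dots> = cw \<beta> w"
    unfolding cw_def
  proof (rule sum.cong[OF refl])
    fix S assume "S \<in> Pow {..<?n}"
    then have S: "S \<subseteq> {..<?n}" by simp
    then have "card (?g ` S) = card S"
      using bij by (intro card_image) (auto simp: bij_betw_def inj_on_subset)
    moreover have "Upsilon \<beta> (std (nths (perm_inv w) (?g ` S))) = Upsilon \<beta> (std (nths w S))"
      unfolding std_nths_perm_inv[OF assms S]
      by (intro Upsilon_perm_inv is_perm_std distinct_nthsI) (use assms in \<open>simp add: is_perm_def\<close>)
    ultimately show "?term (?g ` S) = (-1) ^ (?n - card S) * Upsilon \<beta> (std (nths w S))"
      by simp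
  qed
  finally show ?thesis ..
qed

end
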